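(* Let $d\ge 2$ and for $\mathbf{p}\in(0,\infty)^d$ let $$G(\mathbf{p})=\min_{\mathbf{w}\in W_d}\frac{\prod_{i=1}^d p_i}{\big(\sum_{i=1}^d w_i^2p_i^2\big)^{d/2}}.$$ Then $\sup_{\mathbf{p}\in(0,\infty)^d}G(\mathbf{p})$ is attained, and there exists $\mathbf{p}^\star\in(0,\infty)^d$ such that every point of the one-dimensional vector half-space $P^\star=\{\kappa\mathbf{p}^\star:\kappa>0\}$ is a maximizer of $G$.
   Context: $W_d$ is the set of $d$ vectors $\mathbf{w}_k=(w_{k,1},\dots,w_{k,d})$, $k\in\{1,\dots,d\}$, given by $w_{k,i}=0$ for $i<k$, $w_{k,k}=k$, and $w_{k,i}=i-1$ for $k<i\le d$. *)

theory Defs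
  imports "HOL-Analysis.Analysis"
begin

text \<open>Vectors in (0,inf)^d are represented as functions nat => real, with
  components indexed by 1..d (values outside 1..d are irrelevant).\<close>

definition Wvec :: "nat \<Rightarrow> nat \<Rightarrow> real" where
  "Wvec k i = (if i < k then 0 else if i = k then real k else real i - 1)"

definition Wset :: "nat \<Rightarrow> (nat \<Rightarrow> real) set" where
  "Wset d = Wvec ` {1..d}"

definition posvec :: "nat \<Rightarrow> (nat \<Rightarrow> real) set" where
  "posvec d = {p. \<forall>i\<in>{1..d}. p i > 0}"

definition Gfun :: "nat \<Rightarrow> (nat \<Rightarrow> real) \<Rightarrow> real" where
  "Gfun d p = Min ((\<lambda>w. (\<Prod>i=1..d. p i) /
       ((\<Sum>i=1..d. (w i)^2 * (p i)^2) powr (real d / 2))) ` Wset d)"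

end

theory Submission
  imports Defs
begin

text \<open>\<open>G\<close> is invariant under scaling \<open>p \<mapsto> \<kappa> p\<close>, so it suffices to consider vectors whose
  largest coordinate is \<open>1\<close>. For those, the term belonging to \<open>w\<^sub>1\<close> (all of whose weights
  are \<open>\<ge> 1\<close>) shows \<open>G(p) \<le> min\<^sub>i p\<^sub>i\<close>. Hence, with \<open>e = G(1,\<dots>,1) > 0\<close>, every normalized
  vector with some coordinate below \<open>e\<close> is beaten by \<open>(1,\<dots>,1)\<close>, and the supremum is the
  maximum of the continuous function \<open>G\<close> over the compact box \<open>[e,1]\<^sup>d\<close>. The whole ray through
  a maximizer consists of maximizers by scale invariance.\<close>

definition Gterm :: "nat \<Rightarrow> (nat \<Rightarrow> real) \<Rightarrow> (nat \<Rightarrow> real) \<Rightarrow> real" where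
  "Gterm d w p = (\<Prod>i=1..d. p i) / ((\<Sum>i=1..d. (w i)^2 * (p i)^2) powr (real d / 2))"

lemma Gfun_eq_Min_Gterm: "Gfun d p = Min ((\<lambda>k. Gterm d (Wvec k) p) ` {1..d})"
  unfolding Gfun_def Wset_def Gterm_def by (simp add: image_image)

lemma Gfun_cong:
  assumes "\<And>i. i \<in> {1..d} \<Longrightarrow> p i = q i"
  shows "Gfun d p = Gfun d q"
proof -
  have "(\<Prod>i=1..d. p i) = (\<Prod>i=1..d. q i)"
    "\<And>w. (\<Sum>i=1..d. (w i)^2 * (p i)^2) = (\<Sum>i=1..d. (w i)^2 * (q i)^2)"
    using assms by (auto intro!: prod.cong sum.cong)
  then show ?thesis
    unfolding Gfun_def by simp
qed

lemma Gterm_scale: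
  assumes "c > 0"
  shows "Gterm d w (\<lambda>i. c * p i) = Gterm d w p"
proof -
  have prod_scale: "(\<Prod>i=1..d. c * p i) = c^d * (\<Prod>i=1..d. p i)"
    by (simp add: prod.distrib)
  have sum_scale: "(\<Sum>i=1..d. (w i)^2 * (c * p i)^2) = c^2 * (\<Sum>i=1..d. (w i)^2 * (p i)^2)"
    by (simp add: sum_distrib_left algebra_simps)
  have "(\<Sum>i=1..d. (w i)^2 * (p i)^2) \<ge> 0"
    by (intro sum_nonneg) auto
  moreover have "(c^2) powr (real d / 2) = c^d"
  proof -
    have "(c^2) powr (real d / 2) = (c powr 2) powr (real d / 2)"
      using assms by (simp add: powr_realpow)
    also have "\<dots> = c powr (real d)"
      by (simp add: powr_powr)
    also have "\<dots> = c^d"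
      using assms by (simp add: powr_realpow)
    finally show ?thesis .
  qed
  ultimately show ?thesis
    unfolding Gterm_def prod_scale sum_scale using assms by (simp add: powr_mult)
qed

lemma Gfun_scale: "c > 0 \<Longrightarrow> Gfun d (\<lambda>i. c * p i) = Gfun d p"
  unfolding Gfun_eq_Min_Gterm using Gterm_scale by simp

lemma Wvec_weighted_sum_pos:
  assumes "\<forall>i\<in>{1..d}. p i > 0" "k \<in> {1..d}"
  shows "(\<Sum>i=1..d. (Wvec k i)^2 * (p i)^2) > 0"
proof -
  have "Wvec k k > 0" "p k > 0"
    using assms by (auto simp: Wvec_def)
  then have "(Wvec k k)^2 * (p k)^2 > 0"
    by simp
  also have "\<dots> \<le> (\<Sum>i=1..d. (Wvec k i)^2 * (p i)^2)"
    using assms(2) by (intro member_le_sum) auto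
  finally show ?thesis .
qed

lemma Gfun_pos:
  assumes "\<forall>i\<in>{1..d}. p i > 0" "d \<ge> 1"
  shows "Gfun d p > 0"
proof -
  have "(\<Prod>i=1..d. p i) > 0"
    using assms(1) by (intro prod_pos) auto
  then have "Gterm d (Wvec k) p > 0" if "k \<in> {1..d}" for k
    using Wvec_weighted_sum_pos[OF assms(1) that] unfolding Gterm_def by simp
  then show ?thesis
    unfolding Gfun_eq_Min_Gterm using assms(2) by (subst Min_gr_iff) auto
qed

lemma Gfun_le_component:
  assumes p: "\<forall>i\<in>{1..d}. 0 < p i \<and> p i \<le> 1"
    and j: "j \<in> {1..d}" "p j = 1" and i: "i \<in> {1..d}"
  shows "Gfun d p \<le> p i"
proof -
  define P where "P = (\<Prod>i=1..d. p i)"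
  define D where "D = (\<Sum>i=1..d. (Wvec 1 i)^2 * (p i)^2)"
  have "1 \<le> (Wvec 1 j)^2"
    using j by (intro one_le_power) (auto simp: Wvec_def)
  also have "\<dots> = (Wvec 1 j)^2 * (p j)^2"
    using j by simp
  also have "\<dots> \<le> D"
    unfolding D_def using j by (intro member_le_sum) auto
  finally have "1 \<le> D powr (real d / 2)"
    by (intro ge_one_powr_ge_zero) auto
  moreover have "P \<ge> 0"
    unfolding P_def using p by (intro prod_nonneg) (auto simp: less_imp_le)
  ultimately have "Gterm d (Wvec 1) p \<le> P"
    unfolding Gterm_def P_def [symmetric] D_def [symmetric]
    by (simp add: divide_le_eq mult_le_cancel_left1 order_trans)
  also have "P = p i * (\<Prod>k\<in>{1..d}-{i}. p k)"
    unfolding P_def using i by (simp add: prod.remove)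
  also have "\<dots> \<le> p i"
  proof -
    have "(\<Prod>k\<in>{1..d}-{i}. p k) \<le> 1"
      using p by (intro prod_le_1) (auto simp: less_imp_le)
    then show ?thesis
      using p i by (simp add: mult_left_le)
  qed
  finally have "Gterm d (Wvec 1) p \<le> p i" .
  moreover have "Gfun d p \<le> Gterm d (Wvec 1) p"
    unfolding Gfun_eq_Min_Gterm using j by (intro Min_le) auto
  ultimately show ?thesis by linarith
qed

lemma Gfun_normalize:
  assumes "q \<in> posvec d" "d \<ge> 1"
  obtains q' j where "Gfun d q' = Gfun d q" "\<forall>i\<in>{1..d}. 0 < q' i \<and> q' i \<le> 1"
    "\<forall>i. i \<notin> {1..d} \<longrightarrow> q' i = 0" "j \<in> {1..d}" "q' j = 1"
proof -
  define M where "M = Max (q ` {1..d})"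
  have q_pos: "\<forall>i\<in>{1..d}. q i > 0"
    using assms(1) by (simp add: posvec_def)
  have "M \<in> q ` {1..d}"
    unfolding M_def using assms(2) by (intro Max_in) auto
  then obtain j where j: "j \<in> {1..d}" "M = q j"
    by blast
  have q_le_M: "q i \<le> M" if "i \<in> {1..d}" for i
    unfolding M_def using that by simp
  have M_pos: "M > 0"
    using j q_pos by auto
  define q' where "q' = (\<lambda>i. if i \<in> {1..d} then q i / M else 0)"
  have "Gfun d q' = Gfun d (\<lambda>i. (1/M) * q i)"
    by (rule Gfun_cong) (simp add: q'_def)
  also have "\<dots> = Gfun d q"
    using Gfun_scale[of "1/M"] M_pos by simp
  finally show ?thesis
    using that[of q' j] j M_pos q_pos q_le_M unfolding q'_def by auto
qed

lemma compact_PiE_UNIV: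
  fixes S :: "'i \<Rightarrow> real set"
  assumes "\<And>i. compact (S i)"
  shows "compact (PiE UNIV S)"
proof -
  have "compactin (product_topology (\<lambda>i. euclidean) UNIV) (PiE UNIV S)"
    using assms by (subst compactin_PiE) auto
  then show ?thesis
    by (simp add: euclidean_product_topology)
qed

lemma continuous_on_Min_image:
  fixes g :: "'i \<Rightarrow> 'a::topological_space \<Rightarrow> real"
  assumes "finite A" "A \<noteq> {}" "\<And>a. a \<in> A \<Longrightarrow> continuous_on K (g a)"
  shows "continuous_on K (\<lambda>x. Min ((\<lambda>a. g a x) ` A))"
  using assms
proof (induction A rule: finite_ne_induct)
  case (singleton a)
  then show ?case by simp
next
  case (insert a A)
  then have "continuous_on K (\<lambda>x. min (g a x) (Min ((\<lambda>a. g a x) ` A)))"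
    by (intro continuous_on_min) auto
  then show ?case
    using insert by (simp add: Min_insert)
qed

lemma continuous_on_Gfun:
  assumes "\<forall>p\<in>K. \<forall>i\<in>{1..d}. p i > 0" "d \<ge> 1"
  shows "continuous_on K (Gfun d)"
proof -
  have coordinate: "continuous_on K (\<lambda>p::nat\<Rightarrow>real. p i)" for i
    by (rule continuous_on_subset[OF continuous_on_product_coordinates]) simp
  have "continuous_on K (Gterm d (Wvec k))" if "k \<in> {1..d}" for k
  proof -
    have "\<forall>p\<in>K. (\<Sum>i=1..d. (Wvec k i)^2 * (p i)^2) > 0"
      using assms(1) Wvec_weighted_sum_pos that by blast
    then show ?thesis
      unfolding Gterm_def by (intro continuous_intros coordinate) auto
  qed
  then show ?thesis
    unfolding Gfun_eq_Min_Gterm using assms(2) by (intro continuous_on_Min_image) auto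
qed

lemma Gfun_has_maximizer:
  assumes d: "d \<ge> 1"
  obtains ps where "ps \<in> posvec d" "\<And>q. q \<in> posvec d \<Longrightarrow> Gfun d q \<le> Gfun d ps"
proof -
  define one :: "nat \<Rightarrow> real" where "one = (\<lambda>i. if i \<in> {1..d} then 1 else 0)"
  define e where "e = Gfun d one"
  have e_pos: "e > 0"
    unfolding e_def one_def using d by (intro Gfun_pos) auto
  have e_le_1: "e \<le> 1"
    unfolding e_def using Gfun_le_component[of d one 1 1] d by (simp add: one_def)
  define K where "K = PiE UNIV (\<lambda>i. if i \<in> {1..d} then {e..1} else {0})"
  have K_iff: "p \<in> K \<longleftrightarrow> (\<forall>i\<in>{1..d}. e \<le> p i \<and> p i \<le> 1) \<and> (\<forall>i. i \<notin> {1..d} \<longrightarrow> p i = 0)"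
    for p
    unfolding K_def by (auto simp: PiE_iff)
  have K_pos: "\<forall>p\<in>K. \<forall>i\<in>{1..d}. p i > 0"
  proof (intro ballI)
    fix p i
    assume "p \<in> K" "i \<in> {1..d}"
    then have "e \<le> p i"
      unfolding K_iff by blast
    with e_pos show "p i > 0"
      by linarith
  qed
  have one_in_K: "one \<in> K"
    using e_le_1 unfolding K_iff one_def by auto
  have "compact K"
    unfolding K_def by (intro compact_PiE_UNIV) auto
  then obtain ps where ps: "ps \<in> K" "\<And>p. p \<in> K \<Longrightarrow> Gfun d p \<le> Gfun d ps"
    using continuous_attains_sup[OF _ _ continuous_on_Gfun[OF K_pos d]] one_in_K by blast
  have "Gfun d q \<le> Gfun d ps" if q: "q \<in> posvec d" for q
  proof -
    obtain q' j where q': "Gfun d q' = Gfun d q" "\<forall>i\<in>{1..d}. 0 < q' i \<and> q' i \<le> 1"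
      "\<forall>i. i \<notin> {1..d} \<longrightarrow> q' i = 0" "j \<in> {1..d}" "q' j = 1"
      using Gfun_normalize[OF q d] by blast
    show ?thesis
    proof (cases "\<forall>i\<in>{1..d}. e \<le> q' i")
      case True
      then have "q' \<in> K"
        using q'(2,3) unfolding K_iff by blast
      then show ?thesis
        using ps(2) q'(1) by metis
    next
      case False
      then obtain i where i: "i \<in> {1..d}" "q' i < e"
        by auto
      have "Gfun d q' \<le> q' i"
        using Gfun_le_component[OF q'(2,4,5) i(1)] .
      then show ?thesis
        using i ps(2)[OF one_in_K] q'(1) unfolding e_def by linarith
    qed
  qed
  moreover have "ps \<in> posvec d"
    using K_pos ps(1) by (simp add: posvec_def)
  ultimately show ?thesis
    using that by blast
qed

theorem lemma3:
  fixes d :: nat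
  assumes "d \<ge> 2"
  shows "(\<exists>p\<in>posvec d. Gfun d p = (SUP q\<in>posvec d. Gfun d q))
       \<and> (\<exists>ps\<in>posvec d. \<forall>\<kappa>::real. \<kappa> > 0 \<longrightarrow>
            (\<lambda>i. \<kappa> * ps i) \<in> posvec d \<and>
            (\<forall>q\<in>posvec d. Gfun d q \<le> Gfun d (\<lambda>i. \<kappa> * ps i)))"
proof -
  from assms have "d \<ge> 1"
    by simp
  then obtain ps where ps: "ps \<in> posvec d" "\<And>q. q \<in> posvec d \<Longrightarrow> Gfun d q \<le> Gfun d ps"
    using Gfun_has_maximizer by blast
  have "(SUP q\<in>posvec d. Gfun d q) = Gfun d ps"
    using ps by (intro cSup_eq_maximum) auto
  moreover have "\<forall>\<kappa>::real. \<kappa> > 0 \<longrightarrow> (\<lambda>i. \<kappa> * ps i) \<in> posvec d \<and>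
            (\<forall>q\<in>posvec d. Gfun d q \<le> Gfun d (\<lambda>i. \<kappa> * ps i))"
    using ps by (auto simp: posvec_def Gfun_scale)
  ultimately show ?thesis
    using ps(1) by metis
qed

end
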